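(* Let $t\geq 5$ and let $H$ be the simple graph with vertex set $\{x_1,x_2,x_3,y_1,\dots,y_{t-4}\}$ whose edges are $x_1x_2,x_2x_3,x_1x_3$ and all edges $x_iy_j$ for $i\in\{1,2,3\}$, $1\leq j\leq t-4$. Then $L(H)$ has a $K_t$-immersion.
   Context: $L(H)$ is the simple graph with vertex set $E(H)$ in which two distinct edges of $H$ are adjacent iff they share an endpoint. A graph $G$ has a $K_t$-immersion if there is an injective map $\phi$ from the vertex set of $K_t$ to $V(G)$ and, for each pair $u\neq v$ of vertices of $K_t$, a path in $G$ joining $\phi(u)$ and $\phi(v)$, such that these paths are pairwise edge-disjoint. *)

theory Defs
  imports Main
begin

type_synonym 'a sgraph = "'a set \<times> 'a set set"

definition verts :: "'a sgraph \<Rightarrow> 'a set" where "verts G = fst G"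
definition edges :: "'a sgraph \<Rightarrow> 'a set set" where "edges G = snd G"

definition simple_graph :: "'a sgraph \<Rightarrow> bool" where
  "simple_graph G \<longleftrightarrow> (\<forall>e\<in>edges G. card e = 2 \<and> e \<subseteq> verts G)"

definition line_graph :: "'a sgraph \<Rightarrow> 'a set sgraph" where
  "line_graph H = (edges H, {{e, f} | e f. e \<in> edges H \<and> f \<in> edges H \<and> e \<noteq> f \<and> e \<inter> f \<noteq> {}})"

definition is_path :: "'a sgraph \<Rightarrow> 'a list \<Rightarrow> 'a \<Rightarrow> 'a \<Rightarrow> bool" where
  "is_path G p u v \<longleftrightarrow> p \<noteq> [] \<and> hd p = u \<and> last p = v \<and> distinct p \<and>
     set p \<subseteq> verts G \<and> (\<forall>i. Suc i < length p \<longrightarrow> {p ! i, p ! Suc i} \<in> edges G)"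

definition path_edges :: "'a list \<Rightarrow> 'a set set" where
  "path_edges p = {{p ! i, p ! Suc i} | i. Suc i < length p}"

text \<open>K_t-immersion; the vertices of K_t are 0, ..., t-1 and each unordered pair
  {u,v} is represented by u < v.\<close>
definition has_Kt_immersion :: "'a sgraph \<Rightarrow> nat \<Rightarrow> bool" where
  "has_Kt_immersion G t \<longleftrightarrow>
     (\<exists>(\<phi> :: nat \<Rightarrow> 'a) (P :: nat \<Rightarrow> nat \<Rightarrow> 'a list).
        inj_on \<phi> {0..<t} \<and> \<phi> ` {0..<t} \<subseteq> verts G \<and>
        (\<forall>u v. u < v \<and> v < t \<longrightarrow> is_path G (P u v) (\<phi> u) (\<phi> v)) \<and>
        (\<forall>u v u' v'. u < v \<and> v < t \<and> u' < v' \<and> v' < t \<and> (u, v) \<noteq> (u', v') \<longrightarrow>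
            path_edges (P u v) \<inter> path_edges (P u' v') = {}))"

datatype hvert = X nat | Y nat

definition H_graph :: "nat \<Rightarrow> hvert sgraph" where
  "H_graph t = ({X 1, X 2, X 3} \<union> {Y j | j. 1 \<le> j \<and> j \<le> t - 4},
     {{X 1, X 2}, {X 2, X 3}, {X 1, X 3}} \<union>
     {{X i, Y j} | i j. i \<in> {1, 2, 3} \<and> 1 \<le> j \<and> j \<le> t - 4})"

end

theory Submission
  imports Defs
begin

text \<open>
  The branch vertices are the edges \<open>x\<^sub>1x\<^sub>2, x\<^sub>1x\<^sub>3, x\<^sub>2x\<^sub>3, x\<^sub>3y\<^sub>1\<close> and
  \<open>x\<^sub>1y\<^sub>j\<close> (\<open>1 \<le> j \<le> t - 4\<close>) of \<open>H\<close>. Two of them sharing an endpoint are adjacent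
  in \<open>L(H)\<close>; the only other pairs are \<open>x\<^sub>1x\<^sub>2, x\<^sub>3y\<^sub>1\<close>, \<open>x\<^sub>2x\<^sub>3, x\<^sub>1y\<^sub>j\<close> and
  \<open>x\<^sub>3y\<^sub>1, x\<^sub>1y\<^sub>j\<close> (\<open>j \<ge> 2\<close>), which are joined through the non-branch edges
  \<open>x\<^sub>2y\<^sub>1\<close>, \<open>x\<^sub>2y\<^sub>j\<close> and \<open>x\<^sub>3y\<^sub>j\<close> respectively. A detour vertex is shared only by
  \<open>x\<^sub>1x\<^sub>2, x\<^sub>3y\<^sub>1\<close> and \<open>x\<^sub>2x\<^sub>3, x\<^sub>1y\<^sub>1\<close>, pairs with disjoint ends, so all these
  paths of length at most two are edge-disjoint.
\<close>

lemma verts_line_graph [simp]: "verts (line_graph H) = edges H"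
  by (simp add: line_graph_def verts_def)

lemma edge_line_graphI:
  assumes "e \<in> edges H" "f \<in> edges H" "e \<noteq> f" "e \<inter> f \<noteq> {}"
  shows "{e, f} \<in> edges (line_graph H)"
  using assms unfolding line_graph_def edges_def by auto

lemma path_edges_pair [simp]: "path_edges [a, b] = {{a, b}}"
  unfolding path_edges_def by auto

lemma path_edges_triple [simp]: "path_edges [a, b, c] = {{a, b}, {b, c}}"
proof -
  have "{i. Suc i < length [a, b, c]} = {0, 1}" by auto
  then have "path_edges [a, b, c] = (\<lambda>i. {[a, b, c] ! i, [a, b, c] ! Suc i}) ` {0, 1}"
    unfolding path_edges_def by blast
  then show ?thesis by simp
qed

lemma is_path_pair:
  assumes "a \<noteq> b" "{a, b} \<subseteq> verts G" "{a, b} \<in> edges G"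
  shows "is_path G [a, b] a b"
  using assms unfolding is_path_def by auto

lemma is_path_triple:
  assumes "distinct [a, b, c]" "set [a, b, c] \<subseteq> verts G" "{a, b} \<in> edges G" "{b, c} \<in> edges G"
  shows "is_path G [a, b, c] a c"
  using assms unfolding is_path_def by (auto simp: less_Suc_eq nth_Cons')

locale two_step_routing =
  fixes G :: "'a sgraph" and t :: nat
    and \<phi> :: "nat \<Rightarrow> 'a" and detour :: "nat \<Rightarrow> nat \<Rightarrow> 'a option"
  assumes inj_branch: "inj_on \<phi> {0..<t}"
    and branch_verts: "\<phi> ` {0..<t} \<subseteq> verts G"
    and direct_edge: "\<lbrakk>u < v; v < t; detour u v = None\<rbrakk> \<Longrightarrow> {\<phi> u, \<phi> v} \<in> edges G"
    and detour_verts: "\<lbrakk>u < v; v < t; detour u v = Some m\<rbrakk> \<Longrightarrow> m \<in> verts G - \<phi> ` {0..<t}"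
    and detour_edges:
      "\<lbrakk>u < v; v < t; detour u v = Some m\<rbrakk> \<Longrightarrow> {\<phi> u, m} \<in> edges G \<and> {m, \<phi> v} \<in> edges G"
    and detour_disjoint:
      "\<lbrakk>(u, v) \<noteq> (u', v'); detour u v = Some m; detour u' v' = Some m\<rbrakk> \<Longrightarrow> {u, v} \<inter> {u', v'} = {}"
begin

definition route :: "nat \<Rightarrow> nat \<Rightarrow> 'a list" where
  "route u v = (case detour u v of None \<Rightarrow> [\<phi> u, \<phi> v] | Some m \<Rightarrow> [\<phi> u, m, \<phi> v])"

lemma route_is_path:
  assumes uv: "u < v" "v < t"
  shows "is_path G (route u v) (\<phi> u) (\<phi> v)"
proof -
  have branch_uv: "\<phi> u \<in> \<phi> ` {0..<t}" "\<phi> v \<in> \<phi> ` {0..<t}"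
    using uv by auto
  have ne: "\<phi> u \<noteq> \<phi> v"
    using inj_branch uv by (auto simp: inj_on_eq_iff)
  have in_G: "\<phi> u \<in> verts G" "\<phi> v \<in> verts G"
    using branch_verts branch_uv by blast+
  show ?thesis
  proof (cases "detour u v")
    case None
    then show ?thesis
      using ne in_G direct_edge[OF uv] by (simp add: route_def is_path_pair)
  next
    case (Some m)
    then have m: "m \<in> verts G" "m \<notin> \<phi> ` {0..<t}"
      using detour_verts[OF uv] by auto
    then have "distinct [\<phi> u, m, \<phi> v]"
      using ne branch_uv by auto
    then show ?thesis
      using Some in_G m detour_edges[OF uv Some] by (simp add: route_def is_path_triple)
  qed
qed

lemma path_edges_route:
  "path_edges (route u v) =
    (case detour u v of None \<Rightarrow> {{\<phi> u, \<phi> v}} | Some m \<Rightarrow> (\<lambda>w. {\<phi> w, m}) ` {u, v})"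
  by (auto simp: route_def split: option.split)

lemma detour_edge_eqD:
  assumes "w < t" "w' < t" "m \<notin> \<phi> ` {0..<t}" "m' \<notin> \<phi> ` {0..<t}" "{\<phi> w, m} = {\<phi> w', m'}"
  shows "w = w'" "m = m'"
proof -
  have "m \<noteq> \<phi> w'" "m' \<noteq> \<phi> w"
    using assms(1-4) by auto
  with assms(5) have "m = m'" "\<phi> w = \<phi> w'"
    by (metis doubleton_eq_iff)+
  then show "w = w'" "m = m'"
    using assms(1,2) by (simp_all add: inj_on_eq_iff[OF inj_branch])
qed

lemma route_edges_disjoint:
  assumes uv: "u < v" "v < t" and uv': "u' < v'" "v' < t" and ne: "(u, v) \<noteq> (u', v')"
  shows "path_edges (route u v) \<inter> path_edges (route u' v') = {}"
proof (cases "detour u v"; cases "detour u' v'")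
  assume "detour u v = None" "detour u' v' = None"
  moreover have "{\<phi> u, \<phi> v} \<noteq> {\<phi> u', \<phi> v'}"
    using uv uv' ne by (auto simp: doubleton_eq_iff inj_on_eq_iff[OF inj_branch])
  ultimately show ?thesis
    by (simp add: path_edges_route)
next
  fix m' assume "detour u v = None" "detour u' v' = Some m'"
  moreover have "{\<phi> u, \<phi> v} \<noteq> {\<phi> w, m'}" for w
    using detour_verts[OF uv' \<open>detour u' v' = Some m'\<close>] uv by (auto simp: doubleton_eq_iff)
  ultimately show ?thesis
    by (auto simp: path_edges_route)
next
  fix m assume "detour u v = Some m" "detour u' v' = None"
  moreover have "{\<phi> u', \<phi> v'} \<noteq> {\<phi> w, m}" for w
    using detour_verts[OF uv \<open>detour u v = Some m\<close>] uv' by (auto simp: doubleton_eq_iff)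
  ultimately show ?thesis
    by (auto simp: path_edges_route)
next
  fix m m' assume m: "detour u v = Some m" and m': "detour u' v' = Some m'"
  have "{\<phi> w, m} \<noteq> {\<phi> w', m'}" if w: "w \<in> {u, v}" "w' \<in> {u', v'}" for w w'
  proof
    assume "{\<phi> w, m} = {\<phi> w', m'}"
    then have "w = w'" "m = m'"
      using w uv uv' detour_verts[OF uv m] detour_verts[OF uv' m']
      by (auto intro: detour_edge_eqD)
    then show False
      using detour_disjoint[OF ne m] m' w by blast
  qed
  with m m' show ?thesis
    by (auto simp: path_edges_route)
qed

lemma has_Kt_immersion: "has_Kt_immersion G t"
  unfolding has_Kt_immersion_def
proof (intro exI[of _ \<phi>] exI[of _ route] conjI allI impI)
  show "path_edges (route u v) \<inter> path_edges (route u' v') = {}"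
    if "u < v \<and> v < t \<and> u' < v' \<and> v' < t \<and> (u, v) \<noteq> (u', v')" for u v u' v'
    using that route_edges_disjoint by blast
qed (use inj_branch branch_verts route_is_path in auto)

end

definition H_branch :: "nat \<Rightarrow> hvert set" where
  "H_branch i =
    (if i = 0 then {X 1, X 2} else if i = 1 then {X 1, X 3} else if i = 2 then {X 2, X 3}
     else if i = 3 then {X 3, Y 1} else {X 1, Y (i - 3)})"

definition H_detour :: "nat \<Rightarrow> nat \<Rightarrow> hvert set option" where
  "H_detour u v =
    (if u = 0 \<and> v = 3 then Some {X 2, Y 1}
     else if u = 2 \<and> 4 \<le> v then Some {X 2, Y (v - 3)}
     else if u = 3 \<and> 5 \<le> v then Some {X 3, Y (v - 3)}
     else None)"

lemma H_graph_edgeI: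
  "i \<in> {1, 2, 3} \<Longrightarrow> j \<in> {1, 2, 3} \<Longrightarrow> i \<noteq> j \<Longrightarrow> {X i, X j} \<in> edges (H_graph t)"
  "i \<in> {1, 2, 3} \<Longrightarrow> 1 \<le> j \<Longrightarrow> j \<le> t - 4 \<Longrightarrow> {X i, Y j} \<in> edges (H_graph t)"
  unfolding H_graph_def edges_def by (auto simp: insert_commute)

lemma H_branch_cases:
  obtains "H_branch i = {X 1, X 2}" | "H_branch i = {X 1, X 3}" | "H_branch i = {X 2, X 3}"
    | "H_branch i = {X 3, Y 1}" | j where "H_branch i = {X 1, Y j}"
proof -
  consider "i = 0" | "i = 1" | "i = 2" | "i = 3" | "4 \<le> i"
    by linarith
  then show thesis
    by cases (use that in \<open>simp_all add: H_branch_def\<close>)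
qed

lemma H_branch_in_edges:
  assumes "i < t" "5 \<le> t"
  shows "H_branch i \<in> edges (H_graph t)"
  using assms unfolding H_branch_def by (auto intro: H_graph_edgeI)

lemma inj_H_branch: "inj H_branch"
  by (rule injI) (auto simp: H_branch_def doubleton_eq_iff split: if_splits)

lemma H_branch_intersect:
  assumes "u < v" "H_detour u v = None"
  shows "H_branch u \<inter> H_branch v \<noteq> {}"
  using assms unfolding H_branch_def H_detour_def by (auto split: if_splits)

lemma H_detour_SomeE:
  assumes "H_detour u v = Some m"
  obtains "u = 0" "v = 3" "m = {X 2, Y 1}"
    | "u = 2" "4 \<le> v" "m = {X 2, Y (v - 3)}"
    | "u = 3" "5 \<le> v" "m = {X 3, Y (v - 3)}"
  using assms unfolding H_detour_def by (auto split: if_splits)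

lemma H_detour_in_edges:
  assumes "v < t" "5 \<le> t" "H_detour u v = Some m"
  shows "m \<in> edges (H_graph t)"
  using assms(3) by (rule H_detour_SomeE) (use assms(1,2) in \<open>auto intro: H_graph_edgeI\<close>)

lemma H_detour_not_branch:
  assumes "H_detour u v = Some m"
  shows "m \<notin> range H_branch"
proof
  assume "m \<in> range H_branch"
  then obtain i where "m = H_branch i" by blast
  with assms show False
    by (elim H_detour_SomeE; cases i rule: H_branch_cases) (auto simp: doubleton_eq_iff)
qed

lemma H_detour_meets:
  assumes "H_detour u v = Some m"
  shows "H_branch u \<inter> m \<noteq> {}" "m \<inter> H_branch v \<noteq> {}"
  using assms by (elim H_detour_SomeE; simp add: H_branch_def)+

lemma H_detour_disjoint:
  assumes "(u, v) \<noteq> (u', v')" "H_detour u v = Some m" "H_detour u' v' = Some m"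
  shows "{u, v} \<inter> {u', v'} = {}"
  using assms(2,3) by (elim H_detour_SomeE) (use assms(1) in \<open>auto simp: doubleton_eq_iff\<close>)

lemma two_step_routing_line_graph_H:
  assumes "5 \<le> t"
  shows "two_step_routing (line_graph (H_graph t)) t H_branch H_detour"
proof
  have in_H: "H_branch i \<in> edges (H_graph t)" if "i < t" for i
    using H_branch_in_edges that assms by blast
  show "inj_on H_branch {0..<t}"
    using inj_H_branch by (rule inj_on_subset) simp
  show "H_branch ` {0..<t} \<subseteq> verts (line_graph (H_graph t))"
    using in_H by auto
  show "{H_branch u, H_branch v} \<in> edges (line_graph (H_graph t))"
    if "u < v" "v < t" "H_detour u v = None" for u v
    using that in_H H_branch_intersect inj_H_branch
    by (intro edge_line_graphI) (auto dest: injD)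
  show "m \<in> verts (line_graph (H_graph t)) - H_branch ` {0..<t}"
    if "u < v" "v < t" "H_detour u v = Some m" for u v m
    using H_detour_in_edges[OF that(2) assms that(3)] H_detour_not_branch[OF that(3)] by auto
  show "{H_branch u, m} \<in> edges (line_graph (H_graph t)) \<and> {m, H_branch v} \<in> edges (line_graph (H_graph t))"
    if "u < v" "v < t" "H_detour u v = Some m" for u v m
    using H_detour_in_edges[OF that(2) assms that(3)] H_detour_not_branch[OF that(3)]
      H_detour_meets[OF that(3)] in_H that(1,2)
    by (auto intro!: edge_line_graphI)
qed (rule H_detour_disjoint)

theorem mainTheorem11:
  fixes t :: nat
  assumes "t \<ge> 5"
  shows "has_Kt_immersion (line_graph (H_graph t)) t"
  using two_step_routing_line_graph_H[OF assms] by (rule two_step_routing.has_Kt_immersion)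

end
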